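(* For $0\le a\le1/3$ let $R=\sqrt{a(4-3a)}$, $b=\tfrac12(2-a-R)$, $c=\tfrac12(2-a+R)$, and for $s\in\mathbb{R}$ define $$h(a,s)=(a+s(b-a))\bigl(c-(a+s(b-a))\bigr),$$ $$g(a,s)=3a(1-a)(1+s)+(9a^2-12a+2)s^2+\bigl(1-3a-(5-9a)s+(2-3a)s^2\bigr)R.$$ Then for $0\le a\le1/3$ and $0\le s\le1/2$: (i) $h(a,s)\le h(a,1-s)$; (ii) $g(a,s)\ge0$; and (iii) $g(a,s)+g(a,1-s)\ge0$. *)

theory Defs
  imports Complex_Main
begin

definition RR :: "real \<Rightarrow> real" where
  "RR a = sqrt (a * (4 - 3 * a))"

definition bb :: "real \<Rightarrow> real" where
  "bb a = (2 - a - RR a) / 2"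

definition cc :: "real \<Rightarrow> real" where
  "cc a = (2 - a + RR a) / 2"

definition hh :: "real \<Rightarrow> real \<Rightarrow> real" where
  "hh a s = (a + s * (bb a - a)) * (cc a - (a + s * (bb a - a)))"

definition gg :: "real \<Rightarrow> real \<Rightarrow> real" where
  "gg a s = 3 * a * (1 - a) * (1 + s) + (9 * a^2 - 12 * a + 2) * s^2
          + (1 - 3 * a - (5 - 9 * a) * s + (2 - 3 * a) * s^2) * RR a"

end

theory Submission
  imports Defs
begin

(* For a > 0 put t = R/a. Since R^2 = a(4 - 3a), this gives a = 4/(3 + t^2) and R = 4t/(3 + t^2),
   and a \<le> 1/3 becomes t \<ge> 3. Clearing the denominator turns g(a,s) into a polynomial in t and s,
   whose expansion around t = 3, s = 1/2 has visibly nonnegative terms. Part (i) is the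
   factorisation h(a,1-s) - h(a,s) = (1 - 2s)(b - a)(R - a) together with a \<le> R \<le> 2 - 3a. *)

lemma RR_nonneg: "0 \<le> a \<Longrightarrow> a \<le> 4/3 \<Longrightarrow> 0 \<le> RR a"
  unfolding RR_def by simp

lemma RR_squared: "0 \<le> a \<Longrightarrow> a \<le> 4/3 \<Longrightarrow> (RR a)^2 = a * (4 - 3 * a)"
  unfolding RR_def by simp

lemma RR_ge_self:
  assumes "0 \<le> a" "a \<le> 1"
  shows "a \<le> RR a"
proof -
  have "a^2 \<le> a * (4 - 3 * a)"
    using assms mult_nonneg_nonneg[of a "1 - a"] by (simp add: algebra_simps power2_eq_square)
  then show ?thesis
    using assms real_sqrt_le_mono unfolding RR_def by fastforce
qed

lemma RR_le:
  assumes "0 \<le> a" "a \<le> 1/3"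
  shows "RR a \<le> 2 - 3 * a"
proof -
  have "a * (4 - 3 * a) \<le> (2 - 3 * a)^2"
    using assms mult_nonneg_nonneg[of "1 - a" "1 - 3 * a"] by (simp add: algebra_simps power2_eq_square)
  then show ?thesis
    using assms real_sqrt_le_mono[of _ "(2 - 3 * a)^2"] unfolding RR_def by fastforce
qed

lemma hh_reflect_diff: "hh a (1 - s) - hh a s = (1 - 2 * s) * (bb a - a) * (RR a - a)"
proof -
  have "cc a - 2 * a - (bb a - a) = RR a - a"
    unfolding bb_def cc_def by (simp add: field_simps)
  moreover have "\<And>x d c :: real. (x + (1 - s) * d) * (c - (x + (1 - s) * d)) - (x + s * d) * (c - (x + s * d))
      = (1 - 2 * s) * d * (c - 2 * x - d)"
    by (simp add: algebra_simps)
  ultimately show ?thesis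
    unfolding hh_def by metis
qed

lemma hh_le_reflect:
  assumes "0 \<le> a" "a \<le> 1/3" "s \<le> 1/2"
  shows "hh a s \<le> hh a (1 - s)"
proof -
  have "0 \<le> bb a - a"
    using RR_le[OF assms(1,2)] unfolding bb_def by simp
  moreover have "0 \<le> RR a - a"
    using RR_ge_self assms(1,2) by simp
  ultimately have "0 \<le> (1 - 2 * s) * (bb a - a) * (RR a - a)"
    using assms(3) by simp
  then show ?thesis
    using hh_reflect_diff[of a s] by simp
qed

definition g_param :: "real \<Rightarrow> real \<Rightarrow> real" where
  "g_param t s = 2 * (t^3 + 3*t^2 - 9*t - 3) + 2 * (-5*t^3 + 3*t^2 + 21*t - 3) * s
     + (t^4 + 4*t^3 - 18*t^2 - 12*t + 9) * s^2"

lemma gg_eq_g_param: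
  assumes "RR a = t * a" "a * (3 + t^2) = 4"
  shows "(3 + t^2)^2 * gg a s = 2 * g_param t s"
proof -
  define D where "D = 3 + t^2"
  have "D^2 * gg a s = D^2 * (2 * s^2) + (3 * (1 + s) - 12 * s^2 + t * (1 - 5*s + 2*s^2)) * D * (a * D)
      + (-3 * (1 + s) + 9 * s^2 + t * (-3 + 9*s - 3*s^2)) * (a * D)^2"
    unfolding gg_def assms(1) by (simp add: algebra_simps power2_eq_square)
  also have "\<dots> = 2 * g_param t s"
    using assms(2) unfolding D_def g_param_def by (simp add: algebra_simps eval_nat_numeral)
  finally show ?thesis
    unfolding D_def .
qed

lemma RR_rational_param:
  assumes "0 < a" "a \<le> 1/3"
  obtains t where "3 \<le> t" "RR a = t * a" "a * (3 + t^2) = 4"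
proof
  define t where "t = RR a / a"
  show R: "RR a = t * a"
    using assms by (simp add: t_def)
  have "a * (a * (3 + t^2)) = a * 4"
    using RR_squared[of a] assms R by (simp add: algebra_simps power2_eq_square)
  then show a_eq: "a * (3 + t^2) = 4"
    using assms by simp
  have "0 \<le> t"
    using RR_nonneg[of a] assms by (simp add: t_def)
  moreover have "3^2 \<le> t^2"
    using a_eq assms mult_right_mono[of a "1/3" "3 + t^2"] by simp
  ultimately show "3 \<le> t"
    using power2_le_imp_le by blast
qed

lemma gg_eq_g_param_scaled:
  assumes "0 < a" "a \<le> 1/3"
  obtains t where "3 \<le> t" "\<And>s. gg a s = 2 * g_param t s / (3 + t^2)^2"
proof -
  obtain t where "3 \<le> t" "RR a = t * a" "a * (3 + t^2) = 4"
    using RR_rational_param[OF assms] .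
  moreover have "(3 + t^2)^2 \<noteq> 0"
    by (smt (verit) zero_le_power2 power_not_zero)
  ultimately show thesis
    using that gg_eq_g_param by (metis nonzero_mult_div_cancel_left)
qed

lemma g_param_expansion:
  "g_param (u + 3) (1/2 - w) = u^3 * (u/4 + 1 - w * (u + 6) + w^2 * (u + 16))
     + w * (96 + 96 * u + 12 * u^2) + w^2 * (72 * u^2 + 96 * u)"
  unfolding g_param_def by (simp add: field_simps eval_nat_numeral)

lemma g_param_nonneg:
  assumes "3 \<le> t" "s \<le> 1/2"
  shows "0 \<le> g_param t s"
proof -
  define u w where "u = t - 3" and "w = 1/2 - s"
  have u: "0 \<le> u" and w: "0 \<le> w"
    using assms by (simp_all add: u_def w_def)
  have "4 * (u + 16) * (u/4 + 1 - w * (u + 6) + w^2 * (u + 16)) = (2 * (u + 16) * w - (u + 6))^2 + (28 + 8 * u)"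
    by algebra
  then have "0 \<le> u/4 + 1 - w * (u + 6) + w^2 * (u + 16)"
    using u by (smt (verit) zero_le_power2 zero_less_mult_iff)
  then have "0 \<le> g_param (u + 3) (1/2 - w)"
    unfolding g_param_expansion using u w by simp
  then show ?thesis
    by (simp add: u_def w_def)
qed

lemma g_param_reflect_sum:
  "g_param (u + 3) (1/2 - w) + g_param (u + 3) (1/2 + w)
     = u^4/2 + 2 * u^3 + 2 * (u^4 + 16 * u^3 + 72 * u^2 + 96 * u) * w^2"
  unfolding g_param_def by (simp add: field_simps eval_nat_numeral)

lemma g_param_reflect_sum_nonneg:
  assumes "3 \<le> t"
  shows "0 \<le> g_param t s + g_param t (1 - s)"
proof -
  have "0 \<le> g_param ((t - 3) + 3) (1/2 - (1/2 - s)) + g_param ((t - 3) + 3) (1/2 + (1/2 - s))"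
    unfolding g_param_reflect_sum using assms by simp
  then show ?thesis
    by simp
qed

lemma gg_nonneg:
  assumes "0 \<le> a" "a \<le> 1/3" "s \<le> 1/2"
  shows "0 \<le> gg a s"
proof (cases "a = 0")
  case True
  then show ?thesis
    by (simp add: gg_def RR_def)
next
  case False
  with assms obtain t where "3 \<le> t" "\<And>s. gg a s = 2 * g_param t s / (3 + t^2)^2"
    using gg_eq_g_param_scaled by (metis order_le_less)
  then show ?thesis
    using g_param_nonneg assms(3) by simp
qed

lemma gg_reflect_sum_nonneg:
  assumes "0 \<le> a" "a \<le> 1/3"
  shows "0 \<le> gg a s + gg a (1 - s)"
proof (cases "a = 0")
  case True
  then show ?thesis
    by (simp add: gg_def RR_def)
next
  case False
  with assms obtain t where t: "3 \<le> t" and gg: "\<And>s. gg a s = 2 * g_param t s / (3 + t^2)^2"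
    using gg_eq_g_param_scaled by (metis order_le_less)
  have "gg a s + gg a (1 - s) = 2 * (g_param t s + g_param t (1 - s)) / (3 + t^2)^2"
    unfolding gg by (simp add: add_divide_distrib)
  then show ?thesis
    using g_param_reflect_sum_nonneg[OF t, of s] by (simp del: distrib_left_numeral)
qed

theorem lemmaB1:
  fixes a s :: real
  assumes "0 \<le> a" "a \<le> 1/3" "0 \<le> s" "s \<le> 1/2"
  shows "hh a s \<le> hh a (1 - s) \<and> gg a s \<ge> 0 \<and> gg a s + gg a (1 - s) \<ge> 0"
  using hh_le_reflect gg_nonneg gg_reflect_sum_nonneg assms by blast

end
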